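(* Let $Y\subset\mathbb C^n$ be a $k$-dimensional subspace with basis $b^i=(b^i_1,\dots,b^i_n)$, $i=1,\dots,k$, and $a\in(\mathbb C^\times)^n$; assume that for every $j$, $Y\not\subset\{q_j=0\}$ and $Y^\perp\not\subset\{p_j=0\}$. Let $I=\{i_1,\dots,i_k\}$ and $I'=\{i'_1,\dots,i'_k\}$ be $k$-element subsets of $\{1,\dots,n\}$ (listed increasingly) such that $q_I$ and $q_{I'}$ each form a coordinate system on $Y$. Consider the ordered coordinate systems $(q_I,p_{\bar I})$ and $(q_{I'},p_{\bar I'})$ on $L_{Y,a}$, and let $\mathrm{Jac}_{I,\bar I'}(q_I,p_{\bar I})$ be the Jacobian of the change expressing the second system in terms of the first. Then $$\mathrm{Jac}_{I,\bar I'}(q_I,p_{\bar I})=\big(d_{i'_1,\dots,i'_k}/d_{i_1,\dots,i_k}\big)^2.$$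
   Context: $\mathbb C^n$ has coordinates $q_1,\dots,q_n$, $(\mathbb C^n)^*$ has dual coordinates $p_1,\dots,p_n$; $Y^\perp$ is the annihilator of $Y$. $r_a(q,p)=(q_1+a_1/p_1,\dots,q_n+a_n/p_n,p)$ (defined where all $p_j\ne0$) and $L_{Y,a}=r_a(Y\times Y^\perp)$, the variety in $\mathbb C^n\times\{\prod p_j\ne0\}$ given by $\sum_j\alpha_jp_j=0$ ($\alpha\in Y$), $\sum_j\beta_j(q_j-a_j/p_j)=0$ ($\beta\in Y^\perp$). For a $k$-subset $I\subset\{1,\dots,n\}$, $\bar I$ is its complement, $q_I=\{q_i\}_{i\in I}$, $p_{\bar I}=\{p_j\}_{j\in\bar I}$; when $q_I$ are coordinates on $Y$, $(q_I,p_{\bar I})$ are coordinates on $L_{Y,a}$, and these functions are ordered by increasing index (e.g. for $k=3,n=6,I=\{1,3,6\}$ the order is $q_1,p_2,q_3,p_4,p_5,q_6$). $d_{i_1,\dots,i_k}=\det_{i,l=1}^k(b^i_{i_l})$. *)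

theory Defs
  imports "HOL-Analysis.Derivative" "Jordan_Normal_Form.Determinant"
begin

text \<open>Vectors in C^n (and (C^n)^*) are functions nat => complex, indices 0..n-1
  (the paper's index j corresponds to j-1 here); components with index >= n are 0.\<close>

definition Ysp :: "nat \<Rightarrow> nat \<Rightarrow> (nat \<Rightarrow> nat \<Rightarrow> complex) \<Rightarrow> (nat \<Rightarrow> complex) set" where
  "Ysp n k b = {y. \<exists>c. y = (\<lambda>j. if j < n then (\<Sum>i<k. c i * b i j) else 0)}"

definition annih :: "nat \<Rightarrow> (nat \<Rightarrow> complex) set \<Rightarrow> (nat \<Rightarrow> complex) set" where
  "annih n Y = {p. (\<forall>j\<ge>n. p j = 0) \<and> (\<forall>y\<in>Y. (\<Sum>j<n. y j * p j) = 0)}"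

definition r_map :: "nat \<Rightarrow> (nat \<Rightarrow> complex) \<Rightarrow> (nat \<Rightarrow> complex) \<times> (nat \<Rightarrow> complex)
     \<Rightarrow> (nat \<Rightarrow> complex) \<times> (nat \<Rightarrow> complex)" where
  "r_map n a qp = ((\<lambda>j. if j < n then fst qp j + a j / snd qp j else 0), snd qp)"

definition Lset :: "nat \<Rightarrow> (nat \<Rightarrow> complex) \<Rightarrow> (nat \<Rightarrow> complex) set
     \<Rightarrow> ((nat \<Rightarrow> complex) \<times> (nat \<Rightarrow> complex)) set" where
  "Lset n a Y = r_map n a ` {(q, p). q \<in> Y \<and> p \<in> annih n Y \<and> (\<forall>j<n. p j \<noteq> 0)}"

definition is_coord_system :: "nat \<Rightarrow> (nat \<Rightarrow> complex) set \<Rightarrow> nat set \<Rightarrow> bool" where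
  "is_coord_system n Y I \<longleftrightarrow> I \<subseteq> {..<n} \<and> (\<forall>z. \<exists>!y. y \<in> Y \<and> (\<forall>i\<in>I. y i = z i))"

definition coordI :: "nat set \<Rightarrow> (nat \<Rightarrow> complex) \<times> (nat \<Rightarrow> complex) \<Rightarrow> (nat \<Rightarrow> complex)" where
  "coordI I qp = (\<lambda>j. if j \<in> I then fst qp j else snd qp j)"

definition coord_change :: "nat \<Rightarrow> (nat \<Rightarrow> complex) \<Rightarrow> (nat \<Rightarrow> complex) set \<Rightarrow> nat set \<Rightarrow> nat set
     \<Rightarrow> (nat \<Rightarrow> complex) \<Rightarrow> (nat \<Rightarrow> complex)" where
  "coord_change n a Y I I' x = coordI I' (THE z. z \<in> Lset n a Y \<and> coordI I z = x)"

definition jac :: "nat \<Rightarrow> ((nat \<Rightarrow> complex) \<Rightarrow> (nat \<Rightarrow> complex)) \<Rightarrow> (nat \<Rightarrow> complex) \<Rightarrow> complex" where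
  "jac n F x = Determinant.det (mat n n (\<lambda>(i, j). deriv (\<lambda>t. F (x(j := t)) i) (x j)))"

definition dminor :: "nat \<Rightarrow> (nat \<Rightarrow> nat \<Rightarrow> complex) \<Rightarrow> nat set \<Rightarrow> complex" where
  "dminor k b I = Determinant.det (mat k k (\<lambda>(i, l). b i (sorted_list_of_set I ! l)))"

end

theory Submission
  imports Defs
begin

text \<open>Differentiating r_a, the tangent space of L_{Y,a} at a point is {(u + D v, v) | u in Y, v in Y^perp}
  for a diagonal D, and on this linear space both (q_I, p_{bar I}) and (q_I', p_{bar I'}) are linear
  coordinates; the Jacobian is the determinant of the linear change between them. These changes
  compose, so it suffices to treat a single exchange I' = I - {i} + {j}. Let e be the vector of Y
  whose q_I-coordinates are those of the i-th unit vector. Then the change of coordinates is the identity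
  except in rows i and j, where its 2x2 block has determinant e_j^2, and column j of the basis matrix
  is the combination of its columns in I with coefficients e, so d_{I'} = +- e_j d_I. Induction on
  the number of exchanges needed to reach I' from I gives (d_{I'}/d_I)^2; in particular the Jacobian
  does not depend on a or on the point.\<close>

lemma det_identity_outside_rows:
  fixes A :: "'a::comm_ring_1 mat"
  assumes A: "A \<in> carrier_mat n n" and K: "K \<subseteq> {0..<n}"
    and idr: "\<And>r c. r < n \<Longrightarrow> c < n \<Longrightarrow> r \<notin> K \<Longrightarrow> A $$ (r,c) = (if r = c then 1 else 0)"
  shows "det A = (\<Sum>p\<in>{p. p permutes K}. signof p * (\<Prod>r\<in>K. A $$ (r, p r)))"
proof -
  have "det A = (\<Sum> p \<in> {p. p permutes {0 ..< n}}. signof p * (\<Prod> i = 0 ..< n. A $$ (i, p i)))"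
    using det_def'[OF A] .
  also have "\<dots> = (\<Sum>p\<in>{p. p permutes K}. signof p * (\<Prod>r\<in>K. A $$ (r, p r)))"
  proof (rule sum.mono_neutral_cong_right)
    show "finite {p. p permutes {0..<n}}" by (simp add: finite_permutations)
    show "{p. p permutes K} \<subseteq> {p. p permutes {0..<n}}" using K permutes_subset by blast
    show "\<forall>p\<in>{p. p permutes {0..<n}} - {p. p permutes K}. signof p * (\<Prod>i = 0..<n. A $$ (i, p i)) = 0"
    proof
      fix p assume p: "p \<in> {p. p permutes {0..<n}} - {p. p permutes K}"
      then have pn: "p permutes {0..<n}" and npK: "\<not> p permutes K" by auto
      have "\<exists>r. r \<notin> K \<and> p r \<noteq> r" using pn npK unfolding permutes_def by blast
      then obtain r where r: "r \<notin> K" "p r \<noteq> r" by auto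
      have rn: "r < n" using r pn unfolding permutes_def by auto
      have prn: "p r < n" using rn pn permutes_in_image by fastforce
      have "A $$ (r, p r) = 0" using idr[OF rn prn r(1)] r(2) by auto
      then have "(\<Prod>i = 0..<n. A $$ (i, p i)) = 0"
        using rn by (intro prod_zero) auto
      then show "signof p * (\<Prod>i = 0..<n. A $$ (i, p i)) = 0" by simp
    qed
    show "signof p * (\<Prod>i = 0..<n. A $$ (i, p i)) = signof p * (\<Prod>r\<in>K. A $$ (r, p r))"
      if p: "p \<in> {p. p permutes K}" for p
    proof -
      have "(\<Prod>i = 0..<n. A $$ (i, p i)) = (\<Prod>r\<in>K. A $$ (r, p r))"
      proof (rule prod.mono_neutral_right)
        show "finite {0..<n}" by simp
        show "K \<subseteq> {0..<n}" by fact
        show "\<forall>i\<in>{0..<n} - K. A $$ (i, p i) = 1"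
          using p idr unfolding permutes_def by auto
      qed
      then show ?thesis by simp
    qed
  qed
  finally show ?thesis .
qed

lemma det_identity_outside_two_rows:
  fixes A :: "'a::comm_ring_1 mat"
  assumes A: "A \<in> carrier_mat n n" and ij: "i < n" "j < n" "i \<noteq> j"
    and idr: "\<And>r c. r < n \<Longrightarrow> c < n \<Longrightarrow> r \<noteq> i \<Longrightarrow> r \<noteq> j \<Longrightarrow> A $$ (r,c) = (if r = c then 1 else 0)"
  shows "det A = A $$ (i,i) * A $$ (j,j) - A $$ (i,j) * A $$ (j,i)"
proof -
  have P: "{p. p permutes {i,j}} = {id, Transposition.transpose i j}"
  proof (intro equalityI subsetI)
    fix p assume "p \<in> {p. p permutes {i,j}}"
    then have p: "p permutes {i,j}" by auto
    have pi: "p i \<in> {i,j}" and pj: "p j \<in> {i,j}" using permutes_in_image[OF p] by auto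
    have inj: "p i \<noteq> p j" using p ij(3) by (metis permutes_inj injD)
    have out: "\<And>x. x \<notin> {i,j} \<Longrightarrow> p x = x" using p unfolding permutes_def by auto
    show "p \<in> {id, Transposition.transpose i j}"
    proof (cases "p i = i")
      case True
      then have "p j = j" using pj inj by auto
      then have "p = id" using True out by (intro ext) (metis id_apply insertE singletonD)
      then show ?thesis by simp
    next
      case False
      then have a: "p i = j" using pi by auto
      then have "p j = i" using pj inj by auto
      have "p = Transposition.transpose i j"
      proof
        fix x show "p x = Transposition.transpose i j x"
          using a \<open>p j = i\<close> out[of x] by (cases "x = i"; cases "x = j"; simp)
      qed
      then show ?thesis by simp
    qed
  next
    fix p assume "p \<in> {id, Transposition.transpose i j}"
    then show "p \<in> {p. p permutes {i,j}}"
      by (auto simp: permutes_id permutes_swap_id)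
  qed
  have ne: "id \<noteq> Transposition.transpose i j"
    using ij(3) by (metis id_apply transpose_apply_first)
  have "det A = (\<Sum>p\<in>{p. p permutes {i,j}}. signof p * (\<Prod>r\<in>{i,j}. A $$ (r, p r)))"
    using det_identity_outside_rows[of A n "{i,j}"] A idr ij by auto
  also have "\<dots> = A $$ (i,i) * A $$ (j,j) - A $$ (i,j) * A $$ (j,i)"
    unfolding P using ne ij(3) by (simp add: sign_swap_id )
  finally show ?thesis .
qed

lemma det_identity_outside_one_row:
  fixes A :: "'a::comm_ring_1 mat"
  assumes A: "A \<in> carrier_mat n n" and i: "i < n"
    and idr: "\<And>r c. r < n \<Longrightarrow> c < n \<Longrightarrow> r \<noteq> i \<Longrightarrow> A $$ (r,c) = (if r = c then 1 else 0)"
  shows "det A = A $$ (i,i)"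
proof -
  have P: "{p. p permutes {i}} = {id}"
    using permutes_sing by auto
  have "det A = (\<Sum>p\<in>{p. p permutes {i}}. signof p * (\<Prod>r\<in>{i}. A $$ (r, p r)))"
    using det_identity_outside_rows[of A n "{i}"] A i idr by auto
  then show ?thesis unfolding P by (simp add: )
qed

lemma det_replace_column_lincomb:
  fixes M :: "'a::comm_ring_1 mat"
  assumes M: "M \<in> carrier_mat k k" and l0: "l0 < k"
  shows "det (mat k k (\<lambda>(r, l). if l = l0 then \<Sum>l'<k. M $$ (r, l') * c l' else M $$ (r, l)))
       = c l0 * det M"
proof -
  define R where "R = mat k k (\<lambda>(l', l). if l = l0 then c l' else if l' = l then 1 else (0::'a))"
  have R: "R \<in> carrier_mat k k" unfolding R_def by simp
  have "mat k k (\<lambda>(r, l). if l = l0 then \<Sum>l'<k. M $$ (r, l') * c l' else M $$ (r, l)) = M * R"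
  proof (rule eq_matI)
    fix r l assume "r < dim_row (M * R)" "l < dim_col (M * R)"
    then have rl: "r < k" "l < k" using M by (auto simp: R_def)
    have "(\<Sum>l'<k. M $$ (r, l') * (if l' = l then 1 else 0)) = M $$ (r, l)"
      using rl(2) by (simp add: if_distrib[where f="\<lambda>x. _ * x"] cong: if_cong)
    then show "mat k k (\<lambda>(r, l). if l = l0 then \<Sum>l'<k. M $$ (r, l') * c l' else M $$ (r, l)) $$ (r, l)
        = (M * R) $$ (r, l)"
      using rl M by (auto simp: R_def scalar_prod_def atLeast0LessThan)
  qed (use M in \<open>auto simp: R_def\<close>)
  moreover have "det R = c l0"
  proof -
    have "det R\<^sup>T = R\<^sup>T $$ (l0, l0)"
      by (rule det_identity_outside_one_row[of _ k]) (use l0 in \<open>auto simp: R_def\<close>)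
    then show ?thesis using det_transpose[OF R] l0 by (simp add: R_def)
  qed
  ultimately show ?thesis using det_mult[OF M R] by (simp add: mult.commute)
qed

definition minor_mat :: "nat \<Rightarrow> (nat \<Rightarrow> nat \<Rightarrow> 'a) \<Rightarrow> (nat \<Rightarrow> nat) \<Rightarrow> 'a mat" where
  "minor_mat k b f = mat k k (\<lambda>(r,l). b r (f l))"

lemma minor_mat_carrier [simp]: "minor_mat k b f \<in> carrier_mat k k"
  by (simp add: minor_mat_def)

lemma det_minor_mat_sq_reindex:
  fixes b :: "nat \<Rightarrow> nat \<Rightarrow> 'a::comm_ring_1"
  assumes f: "bij_betw f {..<k} A" and g: "bij_betw g {..<k} A"
  shows "det (minor_mat k b f) ^ 2 = det (minor_mat k b g) ^ 2"
proof -
  have gram: "minor_mat k b h * (minor_mat k b h)\<^sup>T = mat k k (\<lambda>(r, r'). \<Sum>m\<in>A. b r m * b r' m)"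
    if h: "bij_betw h {..<k} A" for h
  proof (rule eq_matI)
    fix r r' assume "r < dim_row (mat k k (\<lambda>(r, r'). \<Sum>m\<in>A. b r m * b r' m))"
      "r' < dim_col (mat k k (\<lambda>(r, r'). \<Sum>m\<in>A. b r m * b r' m))"
    then show "(minor_mat k b h * (minor_mat k b h)\<^sup>T) $$ (r, r')
        = mat k k (\<lambda>(r, r'). \<Sum>m\<in>A. b r m * b r' m) $$ (r, r')"
      using sum.reindex_bij_betw[OF h, of "\<lambda>m. b r m * b r' m"]
      by (simp add: minor_mat_def scalar_prod_def atLeast0LessThan)
  qed (auto simp: minor_mat_def)
  have sq: "det (minor_mat k b h) ^ 2 = det (minor_mat k b h * (minor_mat k b h)\<^sup>T)" for h
    by (simp add: det_mult[of _ k] det_transpose[of _ k] power2_eq_square)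
  show ?thesis using sq gram[OF f] gram[OF g] by simp
qed

lemma bij_betw_sorted_list_of_set: "finite S \<Longrightarrow> card S = k \<Longrightarrow> bij_betw (\<lambda>l. sorted_list_of_set S ! l) {..<k} S"
  by (rule bij_betw_nth) auto

lemma dminor_minor_mat: "dminor k b S = det (minor_mat k b (\<lambda>l. sorted_list_of_set S ! l))"
  unfolding dminor_def minor_mat_def ..

type_synonym cvec = "nat \<Rightarrow> complex"

definition unit_vec :: "nat \<Rightarrow> cvec" where "unit_vec c l = (if l = c then 1 else 0)"

lemma sum_unit_vec_mult: "finite A \<Longrightarrow> (\<Sum>c\<in>A. x c * unit_vec c l) = (if l \<in> A then x l else 0)"
  by (simp add: unit_vec_def if_distrib[where f="\<lambda>u. _ * u"] cong: if_cong)

lemma sum_mult_unit_vec: "finite A \<Longrightarrow> (\<Sum>l\<in>A. f l * unit_vec c l) = (if c \<in> A then f c else 0)"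
  by (simp add: unit_vec_def if_distrib[where f="\<lambda>u. _ * u"] cong: if_cong)

lemma unit_vec_expand: "(\<And>l. n \<le> l \<Longrightarrow> x l = 0) \<Longrightarrow> x = (\<lambda>l. \<Sum>c<n. x c * unit_vec c l)"
  by (rule ext) (auto simp: sum_unit_vec_mult)

definition coord_basis :: "cvec set \<Rightarrow> nat set \<Rightarrow> nat \<Rightarrow> cvec" where
  "coord_basis Y S m = (THE y. y \<in> Y \<and> (\<forall>i\<in>S. y i = unit_vec m i))"

definition perp_lift :: "nat \<Rightarrow> cvec set \<Rightarrow> nat set \<Rightarrow> cvec \<Rightarrow> cvec" where
  "perp_lift n Y S x l =
    (if l < n then (if l \<in> S then - (\<Sum>l'\<in>{..<n}-S. coord_basis Y S l l' * x l') else x l) else 0)"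

locale coord_subspace =
  fixes n :: nat and Y :: "(nat \<Rightarrow> complex) set"
  assumes zero_in: "(\<lambda>j. 0) \<in> Y"
    and add_in: "y \<in> Y \<Longrightarrow> y' \<in> Y \<Longrightarrow> (\<lambda>j. y j + y' j) \<in> Y"
    and smult_in: "y \<in> Y \<Longrightarrow> (\<lambda>j. s * y j) \<in> Y"
    and vanish: "y \<in> Y \<Longrightarrow> n \<le> j \<Longrightarrow> y j = 0"
begin

lemma diff_in: "y \<in> Y \<Longrightarrow> y' \<in> Y \<Longrightarrow> (\<lambda>j. y j - y' j) \<in> Y"
  using add_in[of y "\<lambda>j. (-1) * y' j"] smult_in[of y' "-1"] by simp

lemma sum_in: "finite A \<Longrightarrow> (\<And>a. a \<in> A \<Longrightarrow> f a \<in> Y) \<Longrightarrow> (\<lambda>j. \<Sum>a\<in>A. f a j) \<in> Y"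
proof (induction A rule: finite_induct)
  case empty then show ?case using zero_in by simp
next
  case (insert x F)
  then show ?case using add_in[of "f x" "\<lambda>j. \<Sum>a\<in>F. f a j"] by simp
qed

lemma lincomb_in: "finite A \<Longrightarrow> (\<And>a. a \<in> A \<Longrightarrow> f a \<in> Y) \<Longrightarrow> (\<lambda>j. \<Sum>a\<in>A. g a * f a j) \<in> Y"
  using sum_in[of A "\<lambda>a j. g a * f a j"] smult_in by auto

context
  fixes S assumes cs: "is_coord_system n Y S"
begin

lemma coord_system_subset: "S \<subseteq> {..<n}" using cs unfolding is_coord_system_def by auto
lemma coord_system_finite: "finite S" using coord_system_subset finite_subset by blast

lemma coord_basis_unique_ex: "\<exists>!y. y \<in> Y \<and> (\<forall>i\<in>S. y i = unit_vec m i)"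
  using cs unfolding is_coord_system_def by blast

lemma coord_basis_in: "coord_basis Y S m \<in> Y"
  using theI'[OF coord_basis_unique_ex] unfolding coord_basis_def by blast

lemma coord_basis_coord: "i \<in> S \<Longrightarrow> coord_basis Y S m i = unit_vec m i"
  using theI'[OF coord_basis_unique_ex] unfolding coord_basis_def by blast

lemma coord_system_unique: "y \<in> Y \<Longrightarrow> y' \<in> Y \<Longrightarrow> (\<And>i. i \<in> S \<Longrightarrow> y i = y' i) \<Longrightarrow> y = y'"
  using cs unfolding is_coord_system_def by (metis (no_types, lifting))

lemma sum_coord_basis: "i \<in> S \<Longrightarrow> (\<Sum>m\<in>S. g m * coord_basis Y S m i) = g i"
  by (simp add: coord_basis_coord sum_unit_vec_mult coord_system_finite)

lemma sum_coord_basis_left: "m \<in> S \<Longrightarrow> (\<Sum>l\<in>S. coord_basis Y S m l * f l) = f m"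
  by (simp add: coord_basis_coord sum_mult_unit_vec coord_system_finite mult.commute)

lemma coord_basis_expand: "y \<in> Y \<Longrightarrow> y = (\<lambda>j. \<Sum>m\<in>S. y m * coord_basis Y S m j)"
  by (rule coord_system_unique) (auto intro!: lincomb_in coord_system_finite coord_basis_in simp: sum_coord_basis)

lemma annih_iff_coord_basis:
  "v \<in> annih n Y \<longleftrightarrow> (\<forall>j\<ge>n. v j = 0) \<and> (\<forall>m\<in>S. (\<Sum>l<n. coord_basis Y S m l * v l) = 0)"
proof
  assume "v \<in> annih n Y"
  then show "(\<forall>j\<ge>n. v j = 0) \<and> (\<forall>m\<in>S. (\<Sum>l<n. coord_basis Y S m l * v l) = 0)"
    unfolding annih_def using coord_basis_in by auto
next
  assume a: "(\<forall>j\<ge>n. v j = 0) \<and> (\<forall>m\<in>S. (\<Sum>l<n. coord_basis Y S m l * v l) = 0)"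
  have "(\<Sum>j<n. y j * v j) = 0" if y: "y \<in> Y" for y
  proof -
    have "(\<Sum>j<n. y j * v j) = (\<Sum>j<n. (\<Sum>m\<in>S. y m * coord_basis Y S m j) * v j)"
      by (subst coord_basis_expand[OF y]) simp
    also have "\<dots> = (\<Sum>m\<in>S. y m * (\<Sum>j<n. coord_basis Y S m j * v j))"
      by (simp add: sum_distrib_left sum_distrib_right sum.swap[of _ S] mult_ac)
    also have "\<dots> = 0" using a by simp
    finally show ?thesis .
  qed
  then show "v \<in> annih n Y" using a unfolding annih_def by auto
qed

lemma sum_coord_basis_split:
  assumes m: "m \<in> S"
  shows "(\<Sum>l<n. coord_basis Y S m l * v l) = v m + (\<Sum>l\<in>{..<n}-S. coord_basis Y S m l * v l)"
proof -
  have "(\<Sum>l<n. coord_basis Y S m l * v l)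
      = (\<Sum>l\<in>S. coord_basis Y S m l * v l) + (\<Sum>l\<in>{..<n}-S. coord_basis Y S m l * v l)"
    using coord_system_subset coord_system_finite by (metis add.commute finite_lessThan sum.subset_diff)
  then show ?thesis using sum_coord_basis_left[OF m] by simp
qed

lemma perp_lift_annih: "perp_lift n Y S x \<in> annih n Y"
  unfolding annih_iff_coord_basis
proof (intro conjI allI impI ballI)
  fix j assume "n \<le> j" then show "perp_lift n Y S x j = 0" unfolding perp_lift_def by simp
next
  fix m assume m: "m \<in> S"
  have "(\<Sum>l\<in>{..<n}-S. coord_basis Y S m l * perp_lift n Y S x l) = (\<Sum>l\<in>{..<n}-S. coord_basis Y S m l * x l)"
    by (intro sum.cong) (auto simp: perp_lift_def)
  then show "(\<Sum>l<n. coord_basis Y S m l * perp_lift n Y S x l) = 0"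
    using m coord_system_subset by (auto simp: sum_coord_basis_split perp_lift_def)
qed

lemma perp_lift_unique:
  assumes v: "v \<in> annih n Y" and vx: "\<And>l. l < n \<Longrightarrow> l \<notin> S \<Longrightarrow> v l = x l"
  shows "v = perp_lift n Y S x"
proof
  fix l
  show "v l = perp_lift n Y S x l"
  proof (cases "l \<in> S")
    case True
    have "(\<Sum>l'\<in>{..<n}-S. coord_basis Y S l l' * v l') = (\<Sum>l'\<in>{..<n}-S. coord_basis Y S l l' * x l')"
      using vx by (intro sum.cong) auto
    moreover have "(\<Sum>l'<n. coord_basis Y S l l' * v l') = 0"
      using v True unfolding annih_iff_coord_basis by auto
    ultimately show ?thesis
      using True coord_system_subset
      by (auto simp: sum_coord_basis_split perp_lift_def eq_neg_iff_add_eq_0 add.commute)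
  next
    case False
    then show ?thesis using vx v unfolding perp_lift_def annih_def by auto
  qed
qed

end
end

definition span_lift :: "nat \<Rightarrow> cvec set \<Rightarrow> cvec \<Rightarrow> nat set \<Rightarrow> cvec \<Rightarrow> cvec" where
  "span_lift n Y D S x j = (\<Sum>m\<in>S. (x m - D m * perp_lift n Y S x m) * coord_basis Y S m j)"

definition tangent_lift :: "nat \<Rightarrow> cvec set \<Rightarrow> cvec \<Rightarrow> nat set \<Rightarrow> cvec \<Rightarrow> cvec \<times> cvec" where
  "tangent_lift n Y D S x = ((\<lambda>l. span_lift n Y D S x l + D l * perp_lift n Y S x l), perp_lift n Y S x)"

text \<open>At the point r_a(q, p) of L_{Y,a} the tangent space consists of the pairs (u + D v, v) with
  u in Y, v in Y^perp and D l = -a l / (p l)^2, the derivative of a l / p l; tangent_lift is its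
  parametrisation by the coordinates (q_S, p_{bar S}).\<close>

definition in_tangent :: "nat \<Rightarrow> cvec set \<Rightarrow> cvec \<Rightarrow> cvec \<times> cvec \<Rightarrow> bool" where
  "in_tangent n Y D w \<longleftrightarrow> (\<exists>u\<in>Y. \<exists>v\<in>annih n Y. w = ((\<lambda>l. u l + D l * v l), v))"

definition tangent_jac :: "nat \<Rightarrow> cvec set \<Rightarrow> cvec \<Rightarrow> nat set \<Rightarrow> nat set \<Rightarrow> nat \<Rightarrow> nat \<Rightarrow> complex" where
  "tangent_jac n Y D S S' r c = coordI S' (tangent_lift n Y D S (unit_vec c)) r"

definition tangent_jac_mat :: "nat \<Rightarrow> cvec set \<Rightarrow> cvec \<Rightarrow> nat set \<Rightarrow> nat set \<Rightarrow> complex mat" where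
  "tangent_jac_mat n Y D S S' = mat n n (\<lambda>(r, c). tangent_jac n Y D S S' r c)"

lemma perp_lift_lincomb:
  "finite C \<Longrightarrow> perp_lift n Y S (\<lambda>l. \<Sum>c\<in>C. g c * h c l) l = (\<Sum>c\<in>C. g c * perp_lift n Y S (h c) l)"
  unfolding perp_lift_def
  by (auto simp: sum_distrib_left sum.swap[of _ C] mult_ac sum_negf)

lemma span_lift_lincomb:
  "finite C \<Longrightarrow> span_lift n Y D S (\<lambda>l. \<Sum>c\<in>C. g c * h c l) j = (\<Sum>c\<in>C. g c * span_lift n Y D S (h c) j)"
  unfolding span_lift_def perp_lift_lincomb
  by (simp add: sum_distrib_left sum_distrib_right sum.swap[of _ C] mult_ac sum_subtractf
      right_diff_distrib left_diff_distrib)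

context coord_subspace begin

lemma in_tangent_vanish: "in_tangent n Y D w \<Longrightarrow> n \<le> j \<Longrightarrow> fst w j = 0 \<and> snd w j = 0"
  unfolding in_tangent_def annih_def using vanish by auto

context
  fixes S assumes cs: "is_coord_system n Y S"
begin

lemma span_lift_in: "span_lift n Y D S x \<in> Y"
  unfolding span_lift_def[abs_def] by (rule lincomb_in[OF coord_system_finite[OF cs]]) (rule coord_basis_in[OF cs])

lemma tangent_lift_in_tangent: "in_tangent n Y D (tangent_lift n Y D S x)"
  unfolding in_tangent_def tangent_lift_def
  by (rule bexI[of _ "span_lift n Y D S x"], rule bexI[of _ "perp_lift n Y S x"])
     (auto intro!: span_lift_in perp_lift_annih[OF cs])

lemma span_lift_coord: "i \<in> S \<Longrightarrow> span_lift n Y D S x i = x i - D i * perp_lift n Y S x i"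
  unfolding span_lift_def by (rule sum_coord_basis[OF cs])

lemma coordI_tangent_lift: "(\<And>l. n \<le> l \<Longrightarrow> x l = 0) \<Longrightarrow> coordI S (tangent_lift n Y D S x) = x"
proof
  fix l assume x: "\<And>l. n \<le> l \<Longrightarrow> x l = 0"
  show "coordI S (tangent_lift n Y D S x) l = x l"
    using span_lift_coord[of l] x[of l] unfolding coordI_def tangent_lift_def by (auto simp: perp_lift_def)
qed

lemma tangent_lift_coordI: assumes w: "in_tangent n Y D w" shows "tangent_lift n Y D S (coordI S w) = w"
proof -
  from w obtain u v where u: "u \<in> Y" and v: "v \<in> annih n Y" and wd: "w = ((\<lambda>l. u l + D l * v l), v)"
    unfolding in_tangent_def by auto
  let ?x = "coordI S w"
  have pvx: "perp_lift n Y S ?x = v"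
    by (rule perp_lift_unique[OF cs v, symmetric]) (auto simp: coordI_def wd)
  have "span_lift n Y D S ?x = u"
  proof
    fix j
    have "span_lift n Y D S ?x j = (\<Sum>m\<in>S. u m * coord_basis Y S m j)"
      unfolding span_lift_def pvx by (intro sum.cong) (auto simp: coordI_def wd)
    also have "\<dots> = u j" by (subst (2) coord_basis_expand[OF cs u]) simp
    finally show "span_lift n Y D S ?x j = u j" .
  qed
  then have "tangent_lift n Y D S ?x = ((\<lambda>l. u l + D l * v l), v)" unfolding tangent_lift_def pvx by simp
  then show ?thesis using wd by simp
qed

lemma tangent_lift_linear:
  assumes x: "\<And>l. n \<le> l \<Longrightarrow> x l = 0"
  shows "fst (tangent_lift n Y D S x) l = (\<Sum>c<n. x c * fst (tangent_lift n Y D S (unit_vec c)) l)"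
    and "snd (tangent_lift n Y D S x) l = (\<Sum>c<n. x c * snd (tangent_lift n Y D S (unit_vec c)) l)"
proof -
  have xe: "tangent_lift n Y D S x = tangent_lift n Y D S (\<lambda>l. \<Sum>c<n. x c * unit_vec c l)"
    using unit_vec_expand[OF x] by (rule arg_cong)
  show "snd (tangent_lift n Y D S x) l = (\<Sum>c<n. x c * snd (tangent_lift n Y D S (unit_vec c)) l)"
    unfolding xe by (simp add: tangent_lift_def perp_lift_lincomb)
  show "fst (tangent_lift n Y D S x) l = (\<Sum>c<n. x c * fst (tangent_lift n Y D S (unit_vec c)) l)"
    unfolding xe
    by (simp add: tangent_lift_def perp_lift_lincomb span_lift_lincomb sum.distrib sum_distrib_left
        algebra_simps)
qed

end

lemma tangent_jac_chain:
  assumes I: "is_coord_system n Y I" and S: "is_coord_system n Y S"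
  shows "tangent_jac n Y D I I' r c = (\<Sum>c'<n. tangent_jac n Y D S I' r c' * tangent_jac n Y D I S c' c)"
proof -
  let ?w = "tangent_lift n Y D I (unit_vec c)"
  let ?y = "coordI S ?w"
  have wT: "in_tangent n Y D ?w" by (rule tangent_lift_in_tangent[OF I])
  have yv: "\<And>l. n \<le> l \<Longrightarrow> ?y l = 0"
    using in_tangent_vanish[OF wT] coord_system_subset[OF S] unfolding coordI_def by auto
  have "tangent_jac n Y D I I' r c = coordI I' (tangent_lift n Y D S ?y) r"
    unfolding tangent_jac_def tangent_lift_coordI[OF S wT] ..
  also have "\<dots> = (\<Sum>c'<n. ?y c' * coordI I' (tangent_lift n Y D S (unit_vec c')) r)"
    unfolding coordI_def[of I'] using tangent_lift_linear[OF S, where x="?y", OF yv]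
    by (simp add: sum_distrib_left)
  also have "\<dots> = (\<Sum>c'<n. tangent_jac n Y D S I' r c' * tangent_jac n Y D I S c' c)"
    unfolding tangent_jac_def by (simp add: mult.commute)
  finally show ?thesis .
qed

lemma tangent_jac_self:
  assumes I: "is_coord_system n Y I" and c: "c < n"
  shows "tangent_jac n Y D I I r c = unit_vec c r"
  unfolding tangent_jac_def using coordI_tangent_lift[OF I, of "unit_vec c"] c by (auto simp: unit_vec_def)

lemma tangent_jac_mat_chain:
  assumes I: "is_coord_system n Y I" and S: "is_coord_system n Y S"
  shows "tangent_jac_mat n Y D I I' = tangent_jac_mat n Y D S I' * tangent_jac_mat n Y D I S"
  by (rule eq_matI)
    (auto simp: tangent_jac_mat_def scalar_prod_def atLeast0LessThan intro: tangent_jac_chain[OF I S])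

lemma tangent_jac_mat_self:
  assumes I: "is_coord_system n Y I"
  shows "tangent_jac_mat n Y D I I = 1\<^sub>m n"
  by (rule eq_matI) (auto simp: tangent_jac_mat_def tangent_jac_self[OF I] unit_vec_def)

lemma exchange_coords_exist:
  assumes I: "is_coord_system n Y I" and i: "i \<in> I" and E: "coord_basis Y I i j \<noteq> 0"
  shows "\<exists>y\<in>Y. \<forall>s\<in>insert j (I - {i}). y s = z s"
proof -
  let ?E = "coord_basis Y I i j"
  have fI: "finite I" by (rule coord_system_finite[OF I])
  define \<alpha> where "\<alpha> m = (if m = i then (z j - (\<Sum>m'\<in>I-{i}. z m' * coord_basis Y I m' j)) / ?E else z m)" for m
  let ?y = "\<lambda>l. \<Sum>m\<in>I. \<alpha> m * coord_basis Y I m l"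
  have "?y s = z s" if s: "s \<in> I - {i}" for s
    using sum_coord_basis[OF I, of s \<alpha>] s by (simp add: \<alpha>_def)
  moreover have "?y j = z j"
  proof -
    have "?y j = \<alpha> i * ?E + (\<Sum>m\<in>I-{i}. \<alpha> m * coord_basis Y I m j)"
      using i fI by (simp add: sum.remove)
    also have "(\<Sum>m\<in>I-{i}. \<alpha> m * coord_basis Y I m j) = (\<Sum>m\<in>I-{i}. z m * coord_basis Y I m j)"
      by (intro sum.cong) (auto simp: \<alpha>_def)
    finally show ?thesis using E by (simp add: \<alpha>_def)
  qed
  moreover have "?y \<in> Y" by (rule lincomb_in[OF fI coord_basis_in[OF I]])
  ultimately show ?thesis by (intro bexI[of _ ?y]) auto
qed

lemma exchange_coords_unique:
  assumes I: "is_coord_system n Y I" and i: "i \<in> I" and E: "coord_basis Y I i j \<noteq> 0"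
    and y: "y \<in> Y" "y' \<in> Y" and eq: "\<And>s. s \<in> insert j (I - {i}) \<Longrightarrow> y s = y' s"
  shows "y = y'"
proof -
  let ?d = "\<lambda>l. y l - y' l"
  have fI: "finite I" by (rule coord_system_finite[OF I])
  have d_expand: "?d l = ?d i * coord_basis Y I i l" for l
  proof -
    have "?d l = (\<Sum>m\<in>I. ?d m * coord_basis Y I m l)"
      using coord_basis_expand[OF I diff_in[OF y]] by metis
    also have "\<dots> = ?d i * coord_basis Y I i l + (\<Sum>m\<in>I-{i}. ?d m * coord_basis Y I m l)"
      using i fI by (simp add: sum.remove)
    finally show ?thesis using eq by simp
  qed
  have "?d i = 0" using d_expand[of j] E eq by simp
  then have "?d l = 0" for l using d_expand[of l] by simp
  then show ?thesis by auto
qed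

lemma is_coord_system_exchange:
  assumes I: "is_coord_system n Y I" and i: "i \<in> I" and j: "j < n"
    and E: "coord_basis Y I i j \<noteq> 0"
  shows "is_coord_system n Y (insert j (I - {i}))"
  unfolding is_coord_system_def
proof (intro conjI allI)
  show "insert j (I - {i}) \<subseteq> {..<n}" using coord_system_subset[OF I] j by auto
  fix z
  show "\<exists>!y. y \<in> Y \<and> (\<forall>s\<in>insert j (I - {i}). y s = z s)"
    using exchange_coords_exist[OF I i E, of z] exchange_coords_unique[OF I i E] by metis
qed

lemma exchange_partner_exists:
  assumes I: "is_coord_system n Y I" and I': "is_coord_system n Y I'"
    and i: "i \<in> I" "i \<notin> I'"
  shows "\<exists>j\<in>I' - I. coord_basis Y I i j \<noteq> 0"
proof (rule ccontr)
  assume "\<not> ?thesis"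
  then have z: "\<forall>j\<in>I' - I. coord_basis Y I i j = 0" by auto
  have "coord_basis Y I i = (\<lambda>_. 0)"
  proof (rule coord_system_unique[OF I' coord_basis_in[OF I] zero_in])
    fix l assume l: "l \<in> I'"
    show "coord_basis Y I i l = 0"
    proof (cases "l \<in> I")
      case True then show ?thesis using coord_basis_coord[OF I True] i l by (auto simp: unit_vec_def)
    next
      case False then show ?thesis using z l by auto
    qed
  qed
  moreover have "coord_basis Y I i i = 1" using coord_basis_coord[OF I i(1)] by (simp add: unit_vec_def)
  ultimately show False by simp
qed

lemma coord_system_exchange_step:
  assumes I: "is_coord_system n Y I" and I': "is_coord_system n Y I'" and "\<not> I \<subseteq> I'"
  obtains i j where "i \<in> I - I'" "j \<in> I' - I" "coord_basis Y I i j \<noteq> 0"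
    "is_coord_system n Y (insert j (I - {i}))"
proof -
  from assms(3) obtain i where i: "i \<in> I" "i \<notin> I'" by auto
  then obtain j where j: "j \<in> I' - I" "coord_basis Y I i j \<noteq> 0"
    using exchange_partner_exists[OF I I'] by auto
  have "j < n" using j coord_system_subset[OF I'] by auto
  then show ?thesis using that i j is_coord_system_exchange[OF I i(1)] by auto
qed

lemma det_tangent_jac_mat_exchange:
  assumes I: "is_coord_system n Y I" and i: "i \<in> I" and j: "j < n" "j \<notin> I"
  shows "det (tangent_jac_mat n Y D I (insert j (I - {i}))) = (coord_basis Y I i j)^2"
proof -
  let ?S = "insert j (I - {i})"
  let ?M = "tangent_jac_mat n Y D I ?S"
  have fI: "finite I" by (rule coord_system_finite[OF I])
  have iN: "i < n" using coord_system_subset[OF I] i by auto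
  have ij: "i \<noteq> j" using i j by auto
  have cP: "coordI I (tangent_lift n Y D I (unit_vec c)) = unit_vec c" if "c < n" for c
    by (rule coordI_tangent_lift[OF I]) (use that in \<open>auto simp: unit_vec_def\<close>)
  have idr: "?M $$ (r,c) = (if r = c then 1 else 0)" if "r < n" "c < n" "r \<noteq> i" "r \<noteq> j" for r c
  proof -
    have "?M $$ (r,c) = coordI I (tangent_lift n Y D I (unit_vec c)) r"
      using that by (auto simp: tangent_jac_mat_def tangent_jac_def coordI_def)
    then show ?thesis using cP[OF that(2)] by (simp add: unit_vec_def)
  qed
  have pvi: "perp_lift n Y I (unit_vec i) m = 0" for m
    using i fI by (auto simp: perp_lift_def sum_mult_unit_vec unit_vec_def[of i m])
  have Mii: "?M $$ (i,i) = 0"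
    using iN ij i by (simp add: tangent_jac_mat_def tangent_jac_def coordI_def tangent_lift_def pvi)
  have Mij: "?M $$ (i,j) = - coord_basis Y I i j"
    using iN j ij i
    by (simp add: tangent_jac_mat_def tangent_jac_def coordI_def tangent_lift_def perp_lift_def
        sum_mult_unit_vec)
  have Mji: "?M $$ (j,i) = coord_basis Y I i j"
  proof -
    have "?M $$ (j,i) = span_lift n Y D I (unit_vec i) j"
      using iN j by (simp add: tangent_jac_mat_def tangent_jac_def coordI_def tangent_lift_def pvi)
    also have "\<dots> = (\<Sum>m\<in>I. unit_vec i m * coord_basis Y I m j)"
      unfolding span_lift_def pvi by simp
    also have "\<dots> = (\<Sum>m\<in>I. coord_basis Y I m j * unit_vec i m)" by (simp add: mult.commute)
    also have "\<dots> = coord_basis Y I i j"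
      using i fI by (simp add: sum_mult_unit_vec)
    finally show ?thesis .
  qed
  have "det ?M = ?M $$ (i,i) * ?M $$ (j,j) - ?M $$ (i,j) * ?M $$ (j,i)"
    by (rule det_identity_outside_two_rows[OF _ iN j(1) ij idr]) (auto simp: tangent_jac_mat_def)
  then show ?thesis using Mii Mij Mji by (simp add: power2_eq_square)
qed

end

lemma coord_subspace_Ysp: "coord_subspace n (Ysp n k b)"
proof
  show "(\<lambda>j. 0) \<in> Ysp n k b" unfolding Ysp_def by (rule CollectI, rule exI[of _ "\<lambda>_. 0"]) auto
next
  fix y y' assume "y \<in> Ysp n k b" "y' \<in> Ysp n k b"
  then obtain c c' where "y = (\<lambda>j. if j < n then (\<Sum>i<k. c i * b i j) else 0)"
      "y' = (\<lambda>j. if j < n then (\<Sum>i<k. c' i * b i j) else 0)" unfolding Ysp_def by auto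
  then show "(\<lambda>j. y j + y' j) \<in> Ysp n k b" unfolding Ysp_def
    by (intro CollectI exI[of _ "\<lambda>i. c i + c' i"]) (auto simp: sum.distrib distrib_right)
next
  fix y s assume "y \<in> Ysp n k b"
  then obtain c where "y = (\<lambda>j. if j < n then (\<Sum>i<k. c i * b i j) else 0)" unfolding Ysp_def by auto
  then show "(\<lambda>j. s * y j) \<in> Ysp n k b" unfolding Ysp_def
    by (intro CollectI exI[of _ "\<lambda>i. s * c i"]) (auto simp: sum_distrib_left mult_ac)
next
  fix y j assume "y \<in> Ysp n k b" "n \<le> j"
  then show "y j = 0" unfolding Ysp_def by auto
qed

lemma basis_vector_in_Ysp: "r < k \<Longrightarrow> (\<lambda>j. if j < n then b r j else 0) \<in> Ysp n k b"
  unfolding Ysp_def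
  by (intro CollectI exI[of _ "\<lambda>i. if i = r then 1 else 0"])
    (auto simp: if_distrib[where f="\<lambda>u. u * _"] cong: if_cong)

context
  fixes n k :: nat and b :: "nat \<Rightarrow> nat \<Rightarrow> complex"
  assumes basis: "\<forall>c. (\<forall>j<n. (\<Sum>i<k. c i * b i j) = 0) \<longrightarrow> (\<forall>i<k. c i = 0)"
begin

interpretation coord_subspace n "Ysp n k b" by (rule coord_subspace_Ysp)

lemma dminor_nonzero:
  assumes I: "is_coord_system n (Ysp n k b) I" and cI: "card I = k"
  shows "dminor k b I \<noteq> 0"
proof
  assume "dminor k b I = 0"
  let ?g = "\<lambda>l. sorted_list_of_set I ! l"
  let ?M = "minor_mat k b ?g"
  have "det (?M\<^sup>T) = 0"
    using \<open>dminor k b I = 0\<close> det_transpose[OF minor_mat_carrier[of k b ?g]] by (simp add: dminor_minor_mat)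
  then obtain v where v: "v \<in> carrier_vec k" "v \<noteq> 0\<^sub>v k" "?M\<^sup>T *\<^sub>v v = 0\<^sub>v k"
    using det_0_iff_vec_prod_zero[of "?M\<^sup>T" k] by (auto simp: minor_mat_def)
  define c where "c r = (if r < k then v $ r else 0)" for r
  let ?y = "\<lambda>j. if j < n then (\<Sum>i<k. c i * b i j) else 0"
  have yY: "?y \<in> Ysp n k b" unfolding Ysp_def by auto
  have fI: "finite I" using coord_system_finite[OF I] .
  have bij: "bij_betw ?g {..<k} I" by (rule bij_betw_sorted_list_of_set[OF fI cI])
  have "?y m = 0" if m: "m \<in> I" for m
  proof -
    have "?g ` {..<k} = I" using bij by (simp add: bij_betw_def)
    then have "m \<in> ?g ` {..<k}" using m by auto
    then obtain l where l: "l < k" "?g l = m" by auto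
    have "(?M\<^sup>T *\<^sub>v v) $ l = 0" using v(3) l by simp
    then have "(\<Sum>r<k. b r m * v $ r) = 0"
      using l v(1) by (simp add: minor_mat_def scalar_prod_def atLeast0LessThan)
    moreover have "m < n" using coord_system_subset[OF I] m by auto
    ultimately show ?thesis by (simp add: c_def mult.commute)
  qed
  then have "?y = (\<lambda>_. 0)" using coord_system_unique[OF I yY zero_in] by auto
  then have "\<forall>j<n. (\<Sum>i<k. c i * b i j) = 0" by (metis (mono_tags, lifting))
  then have "\<forall>i<k. c i = 0" using basis by blast
  then have "v = 0\<^sub>v k" using v(1) by (intro eq_vecI) (auto simp: c_def)
  with v(2) show False by simp
qed

lemma dminor_exchange_sq:
  assumes I: "is_coord_system n (Ysp n k b) I" and cI: "card I = k"
    and i: "i \<in> I" and j: "j < n" "j \<notin> I"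
  shows "(dminor k b (insert j (I - {i})))^2 = (coord_basis (Ysp n k b) I i j)^2 * (dminor k b I)^2"
proof -
  let ?S = "insert j (I - {i})"
  let ?e = "coord_basis (Ysp n k b) I"
  let ?s = "\<lambda>l. sorted_list_of_set ?S ! l"
  \<comment> \<open>I listed in the order of ?S, with i in the slot of j; squaring removes the sign of the reordering\<close>
  let ?\<phi> = "\<lambda>l. if ?s l = j then i else ?s l"
  have fI: "finite I" using coord_system_finite[OF I] .
  have cS: "card ?S = k" using cI fI i j
    by (simp add: card_insert_if card_Diff_singleton) (metis Suc_pred card_gt_0_iff empty_iff)
  have bs: "bij_betw ?s {..<k} ?S" by (rule bij_betw_sorted_list_of_set) (use fI cS in auto)
  have "bij_betw (\<lambda>x. if x = j then i else x) ?S I"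
    by (rule bij_betw_imageI) (use i j in \<open>auto simp: inj_on_def\<close>)
  from bij_betw_trans[OF bs this] have b\<phi>: "bij_betw ?\<phi> {..<k} I" by (simp add: comp_def)
  obtain l0 where l0: "l0 < k" "?s l0 = j"
    using bs unfolding bij_betw_def by (metis imageE insertI1 lessThan_iff)
  have s_ne_j: "?s l \<noteq> j" if "l < k" "l \<noteq> l0" for l
    using bs that l0 unfolding bij_betw_def inj_on_def by auto
  have b_j: "b r j = (\<Sum>l<k. b r (?\<phi> l) * ?e (?\<phi> l) j)" if r: "r < k" for r
  proof -
    have "(\<lambda>j. if j < n then b r j else 0) = (\<lambda>j'. \<Sum>m\<in>I. (if m < n then b r m else 0) * ?e m j')"
      by (rule coord_basis_expand[OF I basis_vector_in_Ysp[OF r]])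
    from fun_cong[OF this, of j] have "b r j = (\<Sum>m\<in>I. b r m * ?e m j)"
      using j coord_system_subset[OF I] by (simp cong: sum.cong add: subset_iff)
    also have "\<dots> = (\<Sum>l<k. b r (?\<phi> l) * ?e (?\<phi> l) j)"
      using sum.reindex_bij_betw[OF b\<phi>, of "\<lambda>m. b r m * ?e m j"] by simp
    finally show ?thesis .
  qed
  have "minor_mat k b ?s = mat k k (\<lambda>(r, l). if l = l0
      then \<Sum>l'<k. minor_mat k b ?\<phi> $$ (r, l') * ?e (?\<phi> l') j else minor_mat k b ?\<phi> $$ (r, l))"
    by (rule eq_matI) (auto simp: minor_mat_def b_j l0 s_ne_j)
  then have "dminor k b ?S = ?e i j * det (minor_mat k b ?\<phi>)"
    unfolding dminor_minor_mat
    using det_replace_column_lincomb[of "minor_mat k b ?\<phi>" k l0 "\<lambda>l'. ?e (?\<phi> l') j"] l0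
    by simp
  moreover have "det (minor_mat k b ?\<phi>)^2 = (dminor k b I)^2"
    unfolding dminor_minor_mat
    by (rule det_minor_mat_sq_reindex[OF b\<phi> bij_betw_sorted_list_of_set[OF fI cI]])
  ultimately show ?thesis by (simp add: power_mult_distrib)
qed

lemma det_tangent_jac_mat_dminor:
  assumes I: "is_coord_system n (Ysp n k b) I" "card I = k"
    and I': "is_coord_system n (Ysp n k b) I'" "card I' = k"
  shows "det (tangent_jac_mat n (Ysp n k b) D I I') * (dminor k b I)^2 = (dminor k b I')^2"
  using I
proof (induction "card (I - I')" arbitrary: I rule: less_induct)
  case less
  note I = less.prems(1)
  have fI: "finite I" by (rule coord_system_finite[OF I])
  show ?case
  proof (cases "I \<subseteq> I'")
    case True
    then have "I = I'"
      using card_subset_eq[OF coord_system_finite[OF I'(1)] True] less.prems(2) I'(2) by simp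
    then show ?thesis using tangent_jac_mat_self[OF I] by simp
  next
    case False
    then obtain i j where i: "i \<in> I - I'" and j: "j \<in> I' - I"
      and e: "coord_basis (Ysp n k b) I i j \<noteq> 0" and S: "is_coord_system n (Ysp n k b) (insert j (I - {i}))"
      using coord_system_exchange_step[OF I I'(1)] by blast
    let ?S = "insert j (I - {i})"
    have jn: "j < n" using j coord_system_subset[OF I'(1)] by auto
    have cS: "card ?S = k"
      using less.prems(2) i j fI by (simp add: card_Diff_singleton) (metis Suc_pred card_gt_0_iff empty_iff)
    have "card ((I - I') - {i}) < card (I - I')" by (rule card_Diff1_less) (use fI i in auto)
    moreover have "?S - I' = (I - I') - {i}" using j by auto
    ultimately have lt: "card (?S - I') < card (I - I')" by simp
    have "det (tangent_jac_mat n (Ysp n k b) D I I')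
        = det (tangent_jac_mat n (Ysp n k b) D ?S I') * det (tangent_jac_mat n (Ysp n k b) D I ?S)"
      unfolding tangent_jac_mat_chain[OF I S, of D I'] by (rule det_mult) (auto simp: tangent_jac_mat_def)
    also have "det (tangent_jac_mat n (Ysp n k b) D I ?S) = (coord_basis (Ysp n k b) I i j)^2"
      using det_tangent_jac_mat_exchange[OF I _ jn] i j by auto
    finally show ?thesis
      using less.hyps[OF lt S cS] dminor_exchange_sq[OF I less.prems(2) _ jn] i j
      by (simp add: mult_ac)
  qed
qed

end

definition span_point :: "nat \<Rightarrow> cvec set \<Rightarrow> cvec \<Rightarrow> nat set \<Rightarrow> cvec \<Rightarrow> cvec" where
  "span_point n Y a I x = (\<lambda>s. \<Sum>m\<in>I. (x m - a m / perp_lift n Y I x m) * coord_basis Y I m s)"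

definition L_point :: "nat \<Rightarrow> cvec set \<Rightarrow> cvec \<Rightarrow> nat set \<Rightarrow> cvec \<Rightarrow> cvec \<times> cvec" where
  "L_point n Y a I x = r_map n a (span_point n Y a I x, perp_lift n Y I x)"

definition chart_domain :: "nat \<Rightarrow> cvec set \<Rightarrow> nat set \<Rightarrow> cvec \<Rightarrow> bool" where
  "chart_domain n Y I x \<longleftrightarrow> (\<forall>l\<ge>n. x l = 0) \<and> (\<forall>l<n. perp_lift n Y I x l \<noteq> 0)"

lemma perp_lift_affine:
  "perp_lift n Y S (\<lambda>l. f l + s * g l) l = perp_lift n Y S f l + s * perp_lift n Y S g l"
  unfolding perp_lift_def by (auto simp: sum.distrib sum_distrib_left algebra_simps)

lemma perp_lift_fun_upd:
  "perp_lift n Y S (x(c := t)) l = perp_lift n Y S x l + (t - x c) * perp_lift n Y S (unit_vec c) l"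
proof -
  have "x(c := t) = (\<lambda>l. x l + (t - x c) * unit_vec c l)" by (auto simp: unit_vec_def)
  then show ?thesis by (simp add: perp_lift_affine)
qed

lemma eventually_chart_domain_fun_upd:
  assumes x: "chart_domain n Y I x" and c: "c < n"
  shows "eventually (\<lambda>t. chart_domain n Y I (x(c := t))) (nhds (x c))"
proof -
  have "eventually (\<lambda>t. perp_lift n Y I (x(c := t)) l \<noteq> 0) (nhds (x c))" if l: "l < n" for l
  proof -
    have "((\<lambda>t. perp_lift n Y I (x(c := t)) l) \<longlongrightarrow> perp_lift n Y I x l) (at (x c))"
      unfolding perp_lift_fun_upd by (intro tendsto_eq_intros) auto
    then have "eventually (\<lambda>t. perp_lift n Y I (x(c := t)) l \<noteq> 0) (at (x c))"
      by (rule tendsto_imp_eventually_ne) (use x l in \<open>simp add: chart_domain_def\<close>)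
    then show ?thesis
      unfolding eventually_nhds_conv_at using x l by (simp add: chart_domain_def)
  qed
  then have "eventually (\<lambda>t. \<forall>l\<in>{..<n}. perp_lift n Y I (x(c := t)) l \<noteq> 0) (nhds (x c))"
    by (simp add: eventually_ball_finite_distrib)
  then show ?thesis
    by (rule eventually_mono) (use x c in \<open>auto simp: chart_domain_def\<close>)
qed

context coord_subspace begin

context
  fixes I assumes cs: "is_coord_system n Y I"
begin

lemma L_point_in_Lset: "chart_domain n Y I x \<Longrightarrow> L_point n Y a I x \<in> Lset n a Y"
  unfolding L_point_def Lset_def chart_domain_def span_point_def
  using lincomb_in[OF coord_system_finite[OF cs] coord_basis_in[OF cs]] perp_lift_annih[OF cs]
  by auto

lemma coordI_L_point:
  assumes x: "chart_domain n Y I x"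
  shows "coordI I (L_point n Y a I x) = x"
proof
  fix l
  show "coordI I (L_point n Y a I x) l = x l"
  proof (cases "l \<in> I")
    case True
    then have "l < n" using coord_system_subset[OF cs] by auto
    moreover have "span_point n Y a I x l = x l - a l / perp_lift n Y I x l"
      unfolding span_point_def by (rule sum_coord_basis[OF cs True])
    ultimately show ?thesis using True by (simp add: coordI_def L_point_def r_map_def)
  next
    case False
    then show ?thesis using x by (auto simp: coordI_def L_point_def r_map_def perp_lift_def chart_domain_def)
  qed
qed

lemma Lset_eq_L_point:
  assumes z: "z \<in> Lset n a Y"
  shows "chart_domain n Y I (coordI I z)" "z = L_point n Y a I (coordI I z)"
proof -
  let ?x = "coordI I z"
  from z obtain q p where q: "q \<in> Y" and p: "p \<in> annih n Y" and pnz: "\<forall>j<n. p j \<noteq> 0"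
    and zd: "z = r_map n a (q, p)" unfolding Lset_def by auto
  have pe: "p = perp_lift n Y I ?x"
    by (rule perp_lift_unique[OF cs p]) (use zd in \<open>auto simp: coordI_def r_map_def\<close>)
  have "?x l = 0" if "n \<le> l" for l
    using that coord_system_subset[OF cs] zd p by (auto simp: coordI_def r_map_def annih_def)
  then show "chart_domain n Y I ?x" using pnz pe by (simp add: chart_domain_def)
  have "q m = ?x m - a m / p m" if m: "m \<in> I" for m
    using m coord_system_subset[OF cs] zd by (auto simp: coordI_def r_map_def)
  then have q_eq: "q = span_point n Y a I ?x"
    unfolding span_point_def pe[symmetric] by (subst coord_basis_expand[OF cs q]) (auto intro: sum.cong)
  have "z = r_map n a (q, p)" by (fact zd)
  also have "\<dots> = L_point n Y a I ?x" unfolding L_point_def using q_eq pe by simp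
  finally show "z = L_point n Y a I ?x" .
qed

lemma coordI_image_Lset: "coordI I ` Lset n a Y = {x. chart_domain n Y I x}"
proof (intro equalityI subsetI)
  fix x assume "x \<in> {x. chart_domain n Y I x}"
  then show "x \<in> coordI I ` Lset n a Y"
    using L_point_in_Lset coordI_L_point by (metis image_eqI mem_Collect_eq)
qed (use Lset_eq_L_point(1) in blast)

lemma coord_change_eq_L_point:
  assumes x: "chart_domain n Y I x"
  shows "coord_change n a Y I I' x = coordI I' (L_point n Y a I x)"
proof -
  have "(THE z. z \<in> Lset n a Y \<and> coordI I z = x) = L_point n Y a I x"
  proof (rule the_equality)
    fix z assume "z \<in> Lset n a Y \<and> coordI I z = x"
    then show "z = L_point n Y a I x" using Lset_eq_L_point(2) by blast
  qed (use L_point_in_Lset[OF x] coordI_L_point[OF x] in blast)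
  then show ?thesis by (simp add: coord_change_def)
qed

lemma has_field_derivative_coordI_L_point:
  assumes x: "chart_domain n Y I x" and r: "r < n"
  shows "((\<lambda>t. coordI I' (L_point n Y a I (x(c := t))) r) has_field_derivative
      tangent_jac n Y (\<lambda>l. - (a l / (perp_lift n Y I x l)^2)) I I' r c) (at (x c))"
proof -
  define P where "P l = perp_lift n Y I x l" for l
  define V where "V l = perp_lift n Y I (unit_vec c) l" for l
  have P: "P l \<noteq> 0" if "l \<in> I \<or> l = r" for l
    using x that coord_system_subset[OF cs] r by (auto simp: P_def chart_domain_def)
  have deriv_inverse: "((\<lambda>t. a l / (P l + (t - x c) * V l)) has_field_derivative - (a l / (P l)^2) * V l) (at (x c))"
    if "P l \<noteq> 0" for l
    using that by (auto intro!: derivative_eq_intros simp: field_simps power2_eq_square)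
  have deriv_upd: "((\<lambda>t. (x(c := t)) m) has_field_derivative unit_vec c m) (at (x c))" for m
    by (cases "m = c") (auto simp: unit_vec_def intro!: derivative_eq_intros)
  show ?thesis
  proof (cases "r \<in> I'")
    case True
    have "((\<lambda>t. (\<Sum>m\<in>I. ((x(c := t)) m - a m / (P m + (t - x c) * V m)) * coord_basis Y I m r)
        + a r / (P r + (t - x c) * V r)) has_field_derivative
        (\<Sum>m\<in>I. (unit_vec c m - (- (a m / (P m)^2) * V m)) * coord_basis Y I m r)
        + (- (a r / (P r)^2) * V r)) (at (x c))"
      by (intro DERIV_add DERIV_sum DERIV_cmult_right DERIV_diff deriv_upd deriv_inverse P) auto
    then show ?thesis using True r
      by (simp add: coordI_def L_point_def r_map_def span_point_def perp_lift_fun_upd tangent_jac_def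
          tangent_lift_def span_lift_def P_def V_def)
  next
    case False
    have "((\<lambda>t. P r + (t - x c) * V r) has_field_derivative V r) (at (x c))"
      by (auto intro!: derivative_eq_intros)
    then show ?thesis using False
      by (simp add: coordI_def L_point_def r_map_def perp_lift_fun_upd tangent_jac_def tangent_lift_def
          P_def V_def)
  qed
qed

lemma deriv_coord_change:
  assumes x: "chart_domain n Y I x" and c: "c < n" and r: "r < n"
  shows "deriv (\<lambda>t. coord_change n a Y I I' (x(c := t)) r) (x c)
       = tangent_jac n Y (\<lambda>l. - (a l / (perp_lift n Y I x l)^2)) I I' r c"
proof (rule DERIV_imp_deriv)
  have ev: "eventually (\<lambda>t. coord_change n a Y I I' (x(c := t)) r = coordI I' (L_point n Y a I (x(c := t))) r)
      (nhds (x c))"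
    by (rule eventually_mono[OF eventually_chart_domain_fun_upd[OF x c]]) (simp add: coord_change_eq_L_point)
  then show "((\<lambda>t. coord_change n a Y I I' (x(c := t)) r) has_field_derivative
      tangent_jac n Y (\<lambda>l. - (a l / (perp_lift n Y I x l)^2)) I I' r c) (at (x c))"
    using DERIV_cong_ev[OF refl ev refl] has_field_derivative_coordI_L_point[OF x r] by simp
qed

lemma jac_coord_change:
  assumes x: "x \<in> coordI I ` Lset n a Y"
  shows "jac n (coord_change n a Y I I') x
       = det (tangent_jac_mat n Y (\<lambda>l. - (a l / (perp_lift n Y I x l)^2)) I I')"
  using x unfolding coordI_image_Lset jac_def tangent_jac_mat_def
  by (intro arg_cong[where f=det] eq_matI) (auto simp: deriv_coord_change)

end

end

theorem lemma4p3:
  fixes n k :: nat and b :: "nat \<Rightarrow> nat \<Rightarrow> complex" and a x :: "nat \<Rightarrow> complex"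
    and I I' :: "nat set"
  assumes basis: "\<forall>c. (\<forall>j<n. (\<Sum>i<k. c i * b i j) = 0) \<longrightarrow> (\<forall>i<k. c i = 0)"
    and a_nz: "\<forall>j<n. a j \<noteq> 0"
    and Y_q: "\<forall>j<n. \<exists>y\<in>Ysp n k b. y j \<noteq> 0"
    and Yperp_p: "\<forall>j<n. \<exists>p\<in>annih n (Ysp n k b). p j \<noteq> 0"
    and I: "I \<subseteq> {..<n}" "card I = k" "is_coord_system n (Ysp n k b) I"
    and I': "I' \<subseteq> {..<n}" "card I' = k" "is_coord_system n (Ysp n k b) I'"
    and x: "x \<in> coordI I ` Lset n a (Ysp n k b)"
  shows "jac n (coord_change n a (Ysp n k b) I I') x = (dminor k b I' / dminor k b I) ^ 2"
proof -
  interpret coord_subspace n "Ysp n k b" by (rule coord_subspace_Ysp)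
  define D where "D l = - (a l / (perp_lift n (Ysp n k b) I x l)^2)" for l
  have "jac n (coord_change n a (Ysp n k b) I I') x = det (tangent_jac_mat n (Ysp n k b) D I I')"
    unfolding D_def by (rule jac_coord_change[OF I(3) x])
  moreover have "det (tangent_jac_mat n (Ysp n k b) D I I') * (dminor k b I)^2 = (dminor k b I')^2"
    by (rule det_tangent_jac_mat_dminor[OF basis I(3,2) I'(3,2)])
  moreover have "dminor k b I \<noteq> 0" by (rule dminor_nonzero[OF basis I(3,2)])
  ultimately show ?thesis by (simp add: power_divide field_simps)
qed

end
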